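(* There is an absolute constant $C>0$ such that for every integer $N\ge 2$ and every integer $h$ with $0<|h|\le 2N^2$, \[ r_N(h) \le C N^2 \sum_{\substack{d\mid h\\ 1\le d\le N}} \frac{1}{d}, \qquad\text{and}\qquad r_N(0)\le C N^2\log N. \] Moreover, for every integer $k\ge 2$ there is a constant $C_k>0$ such that $I_k(N)\le C_k N^{2k+2}$ for all integers $N\ge 2$.
   Context: For a positive integer $N$ and $h\in\mathbb{Z}$, let $r_N(h)$ be the number of tuples $(a_1,a_2,a_3,a_4)\in([-N,N]\cap\mathbb{Z})^4$ with $a_1a_2-a_3a_4=h$. For an integer $k\ge 2$, let $I_k(N)=\sum_{h\in\mathbb{Z}} r_N(h)^k$. *)

theory Defs
  imports "HOL-Analysis.Analysis"
begin

definition rN :: "nat \<Rightarrow> int \<Rightarrow> nat" where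
  "rN N h = card {(a1::int, a2::int, a3::int, a4::int).
      a1 \<in> {-int N..int N} \<and> a2 \<in> {-int N..int N} \<and>
      a3 \<in> {-int N..int N} \<and> a4 \<in> {-int N..int N} \<and>
      a1 * a2 - a3 * a4 = h}"

text \<open>I_k(N) = sum over all integers h of r_N(h)^k. Only finitely many terms are
  nonzero, so this is the sum over the (finite) support of r_N.\<close>
definition IkN :: "nat \<Rightarrow> nat \<Rightarrow> nat" where
  "IkN k N = (\<Sum>h \<in> {h. rN N h \<noteq> 0}. rN N h ^ k)"

end

theory Submission
  imports Defs
begin

text \<open>For fixed \<open>(a\<^sub>1, a\<^sub>3) \<noteq> (0, 0)\<close> the equation \<open>a\<^sub>1 a\<^sub>2 - a\<^sub>3 a\<^sub>4 = h\<close> is linear in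
  \<open>(a\<^sub>2, a\<^sub>4)\<close>: it is unsolvable unless \<open>g = gcd a\<^sub>1 a\<^sub>3\<close> divides \<open>h\<close>, and otherwise one
  coordinate of its solutions runs through a residue class modulo \<open>max \<bar>a\<^sub>1\<bar> \<bar>a\<^sub>3\<bar> / g\<close>, so
  there are \<open>O(N g / max \<bar>a\<^sub>1\<bar> \<bar>a\<^sub>3\<bar> + 1)\<close> of them in the box. As \<open>g\<close> is a divisor
  \<open>d \<le> N\<close> of \<open>h\<close>, summing over \<open>(a\<^sub>1, a\<^sub>3)\<close> and interchanging sums bounds \<open>r\<^sub>N(h)\<close>
  by \<open>N\<^sup>2\<close> plus \<open>N \<Sum>\<^bsub>d | h, d \<le> N\<^esub> d \<Sum>\<^bsub>d | a\<^sub>1, d | a\<^sub>3\<^esub> 1 / max \<bar>a\<^sub>1\<bar> \<bar>a\<^sub>3\<bar>\<close>, and the inner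
  lattice sum is \<open>O(N / d\<^sup>2)\<close>. This gives \<open>r\<^sub>N(h) = O(N\<^sup>2 \<Sum>\<^bsub>d | h, d \<le> N\<^esub> 1 / d)\<close> for every
  \<open>h\<close>, and at \<open>h = 0\<close> the divisor sum is the harmonic number.

  For the moments, the power mean inequality with weights \<open>d\<^sup>-\<^sup>s\<close>, \<open>s = 1 + 1/(2k)\<close>, gives
  \<open>(\<Sum>\<^bsub>d | h, d \<le> N\<^esub> 1 / d)\<^sup>k = O\<^sub>k(\<Sum>\<^bsub>d | h, d \<le> N\<^esub> d\<^sup>-\<^sup>1\<^sup>/\<^sup>2)\<close>; summed over
  \<open>\<bar>h\<bar> \<le> 2N\<^sup>2\<close> this is \<open>O(N\<^sup>2 \<Sum>\<^sub>d d\<^sup>-\<^sup>3\<^sup>/\<^sup>2) = O(N\<^sup>2)\<close>, hence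
  \<open>I\<^sub>k(N) = O((N\<^sup>2)\<^sup>k N\<^sup>2)\<close>.\<close>

lemma div_gcd_dvd_of_mult_eq:
  fixes a b u v :: int
  assumes "a * u = b * v" "a \<noteq> 0"
  shows "a div gcd a b dvd v"
proof -
  define g where "g = gcd a b"
  have g: "g \<noteq> 0" using assms(2) by (simp add: g_def)
  obtain a' b' where ab: "a = a' * g" "b = b' * g" and "coprime a' b'"
    using gcd_coprime_exists[of a b] g unfolding g_def by blast
  from assms(1) have "(a' * u) * g = (b' * v) * g" by (simp add: ab mult_ac)
  then have "a' * u = b' * v" using g by simp
  then have "a' dvd v"
    using \<open>coprime a' b'\<close> by (metis dvd_triv_left coprime_dvd_mult_right_iff)
  moreover have "a div g = a'" using g by (simp add: ab(1))
  ultimately show ?thesis by (simp add: g_def)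
qed

lemma power_weighted_sum_le:
  fixes a y :: "'i \<Rightarrow> real"
  assumes "finite S" "n > 0" "\<And>i. i \<in> S \<Longrightarrow> a i \<ge> 0" "\<And>i. i \<in> S \<Longrightarrow> y i \<ge> 0"
  shows "(\<Sum>i\<in>S. a i * y i) ^ n \<le> (\<Sum>i\<in>S. a i) ^ (n - 1) * (\<Sum>i\<in>S. a i * y i ^ n)"
proof (cases "sum a S = 0")
  case True
  then have "\<forall>i\<in>S. a i = 0" using sum_nonneg_eq_0_iff[OF assms(1)] assms(3) by blast
  then show ?thesis using assms(2) by (simp add: zero_power)
next
  case False
  define A where "A = sum a S"
  have A_pos: "A > 0" using False assms(3) sum_nonneg[of S a] by (simp add: A_def)
  have "S \<noteq> {}" using False by auto
  have convex: "convex_on {0..} (\<lambda>x::real. x ^ n)"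
    by (cases "even n") (auto intro: convex_on_subset[OF convex_power_even] convex_power_odd)
  have "(\<Sum>i\<in>S. (a i / A) *\<^sub>R y i) ^ n \<le> (\<Sum>i\<in>S. a i / A * y i ^ n)"
    using convex_on_sum[OF assms(1) \<open>S \<noteq> {}\<close> convex, of "\<lambda>i. a i / A" y] A_pos assms(3,4)
    by (simp add: A_def sum_divide_distrib[symmetric])
  then have "(\<Sum>i\<in>S. a i * y i) ^ n / A ^ n \<le> (\<Sum>i\<in>S. a i * y i ^ n) / A"
    by (simp add: sum_divide_distrib[symmetric] power_divide)
  then have "(\<Sum>i\<in>S. a i * y i) ^ n \<le> (\<Sum>i\<in>S. a i * y i ^ n) / A * A ^ n"
    using A_pos by (subst (asm) pos_divide_le_eq) auto
  also have "\<dots> = A ^ (n - 1) * (\<Sum>i\<in>S. a i * y i ^ n)"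
    using A_pos assms(2) by (cases n) (simp_all add: field_simps)
  finally show ?thesis by (simp add: A_def)
qed

lemma summable_real_powr_neg: "s > 1 \<Longrightarrow> summable (\<lambda>n. real n powr -s)"
  by (simp add: summable_real_powr_iff)

lemma sum_powr_le_suminf:
  assumes "s > 1" "finite A"
  shows "(\<Sum>d\<in>A. real d powr -s) \<le> (\<Sum>n. real n powr -s)"
  by (rule sum_le_suminf) (use assms summable_real_powr_neg in auto)

lemma card_nonzero_multiples_le:
  fixes d L :: int
  assumes "d > 0" "L \<ge> 0"
  shows "real (card {x \<in> {-L..L}. x \<noteq> 0 \<and> d dvd x}) \<le> 2 * real_of_int L / real_of_int d"
proof -
  define q where "q = L div d"
  have "{x \<in> {-L..L}. x \<noteq> 0 \<and> d dvd x} \<subseteq> (\<lambda>j. d * j) ` ({-q..q} - {0})"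
  proof
    fix x assume x: "x \<in> {x \<in> {-L..L}. x \<noteq> 0 \<and> d dvd x}"
    then obtain j where j: "x = d * j" by blast
    have "j = x div d" "-j = (-x) div d"
      using j assms(1) by (simp, metis minus_mult_right nonzero_mult_div_cancel_left less_irrefl)
    then have "j \<le> q" "-j \<le> q"
      using zdiv_mono1[of x L d] zdiv_mono1[of "-x" L d] x assms(1) unfolding q_def by auto
    then show "x \<in> (\<lambda>j. d * j) ` ({-q..q} - {0})" using x j by auto
  qed
  then have "card {x \<in> {-L..L}. x \<noteq> 0 \<and> d dvd x} \<le> card ((\<lambda>j. d * j) ` ({-q..q} - {0}))"
    by (intro card_mono) auto
  also have "\<dots> \<le> card ({-q..q} - {0})"
    by (rule card_image_le) simp
  also have "\<dots> = 2 * nat q"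
    using assms by (simp add: q_def pos_imp_zdiv_nonneg_iff)
  finally have "real (card {x \<in> {-L..L}. x \<noteq> 0 \<and> d dvd x}) \<le> real (2 * nat q)"
    by (rule of_nat_mono)
  also have "\<dots> = 2 * real_of_int q"
    using assms by (simp add: q_def pos_imp_zdiv_nonneg_iff)
  also have "\<dots> \<le> 2 * real_of_int L / real_of_int d"
    using real_of_int_div4[of L d] by (simp add: q_def)
  finally show ?thesis .
qed

lemma card_multiples_le:
  fixes d L :: int
  assumes "d > 0" "L \<ge> 0"
  shows "real (card {x \<in> {-L..L}. d dvd x}) \<le> 2 * real_of_int L / real_of_int d + 1"
proof -
  have fin: "finite {x \<in> {-L..L}. x \<noteq> 0 \<and> d dvd x}"
    by (rule finite_subset[of _ "{-L..L}"]) auto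
  have "card {x \<in> {-L..L}. d dvd x} \<le> card (insert 0 {x \<in> {-L..L}. x \<noteq> 0 \<and> d dvd x})"
    using fin by (intro card_mono) auto
  also have "\<dots> \<le> card {x \<in> {-L..L}. x \<noteq> 0 \<and> d dvd x} + 1"
    using fin by (simp add: card_insert_if)
  finally show ?thesis using card_nonzero_multiples_le[OF assms] by linarith
qed

lemma sum_inverse_abs_multiples_le:
  fixes d :: int
  assumes "d > 0"
  shows "(\<Sum>a\<in>{-int N..int N}. \<Sum>b\<in>{-int N..int N}.
            if d dvd a \<and> d dvd b \<and> \<bar>b\<bar> \<le> \<bar>a\<bar> then 1 / real_of_int \<bar>a\<bar> else 0)
           \<le> 6 * real N / (real_of_int d)\<^sup>2"
proof -
  let ?I = "{-int N..int N}"
  have inner: "(\<Sum>b\<in>?I. if d dvd a \<and> d dvd b \<and> \<bar>b\<bar> \<le> \<bar>a\<bar> then 1 / real_of_int \<bar>a\<bar> else 0)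
                 \<le> (if a \<noteq> 0 \<and> d dvd a then 3 / real_of_int d else 0)" for a
  proof (cases "a \<noteq> 0 \<and> d dvd a")
    case False
    then have "(\<Sum>b\<in>?I. if d dvd a \<and> d dvd b \<and> \<bar>b\<bar> \<le> \<bar>a\<bar> then 1 / real_of_int \<bar>a\<bar> else 0) = 0"
      by (intro sum.neutral) auto
    then show ?thesis using False assms by auto
  next
    case True
    have d_le: "real_of_int d \<le> real_of_int \<bar>a\<bar>"
      using True dvd_imp_le_int[of a d] assms by simp
    have "card {b \<in> ?I. d dvd b \<and> \<bar>b\<bar> \<le> \<bar>a\<bar>} \<le> card {b \<in> {-\<bar>a\<bar>..\<bar>a\<bar>}. d dvd b}"
      by (intro card_mono) (auto intro: finite_subset[of _ "{-\<bar>a\<bar>..\<bar>a\<bar>}"])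
    then have card_le: "real (card {b \<in> ?I. d dvd b \<and> \<bar>b\<bar> \<le> \<bar>a\<bar>})
                          \<le> 2 * real_of_int \<bar>a\<bar> / real_of_int d + 1"
      using card_multiples_le[OF assms, of "\<bar>a\<bar>"] by linarith
    have "(\<Sum>b\<in>?I. if d dvd a \<and> d dvd b \<and> \<bar>b\<bar> \<le> \<bar>a\<bar> then 1 / real_of_int \<bar>a\<bar> else 0)
            = real (card {b \<in> ?I. d dvd b \<and> \<bar>b\<bar> \<le> \<bar>a\<bar>}) / real_of_int \<bar>a\<bar>"
      using True by (simp add: sum.inter_filter[symmetric])
    also have "\<dots> \<le> (2 * real_of_int \<bar>a\<bar> / real_of_int d + 1) / real_of_int \<bar>a\<bar>"
      using card_le by (intro divide_right_mono) auto
    also have "\<dots> = 2 / real_of_int d + 1 / real_of_int \<bar>a\<bar>"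
      using True by (simp add: field_simps)
    also have "\<dots> \<le> 3 / real_of_int d"
      using d_le assms frac_le[of 1 1 "real_of_int d" "real_of_int \<bar>a\<bar>"] by simp
    finally show ?thesis using True by simp
  qed
  have "(\<Sum>a\<in>?I. \<Sum>b\<in>?I. if d dvd a \<and> d dvd b \<and> \<bar>b\<bar> \<le> \<bar>a\<bar> then 1 / real_of_int \<bar>a\<bar> else 0)
          \<le> (\<Sum>a\<in>?I. if a \<noteq> 0 \<and> d dvd a then 3 / real_of_int d else 0)"
    by (intro sum_mono inner)
  also have "\<dots> = 3 / real_of_int d * real (card {a \<in> ?I. a \<noteq> 0 \<and> d dvd a})"
    by (simp add: sum.inter_filter[symmetric])
  also have "\<dots> \<le> 3 / real_of_int d * (2 * real N / real_of_int d)"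
    using card_nonzero_multiples_le[OF assms, of "int N"] assms by (intro mult_left_mono) auto
  also have "\<dots> = 6 * real N / (real_of_int d)\<^sup>2"
    by (simp add: power2_eq_square)
  finally show ?thesis .
qed

text \<open>The summand at \<open>a = b = 0\<close> is \<open>1 / 0 = 0\<close>.\<close>

lemma sum_inverse_max_abs_multiples_le:
  fixes d :: int
  assumes "d > 0"
  shows "(\<Sum>a\<in>{-int N..int N}. \<Sum>b\<in>{-int N..int N}.
            if d dvd a \<and> d dvd b then 1 / real_of_int (max \<bar>a\<bar> \<bar>b\<bar>) else 0)
           \<le> 12 * real N / (real_of_int d)\<^sup>2"
proof -
  let ?I = "{-int N..int N}"
  let ?A = "\<lambda>a b. if d dvd a \<and> d dvd b \<and> \<bar>b\<bar> \<le> \<bar>a\<bar> then 1 / real_of_int \<bar>a\<bar> else 0"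
  have "(if d dvd a \<and> d dvd b then 1 / real_of_int (max \<bar>a\<bar> \<bar>b\<bar>) else 0) \<le> ?A a b + ?A b a"
    for a b
    by (cases "\<bar>b\<bar> \<le> \<bar>a\<bar>") (simp_all add: max_def)
  then have "(\<Sum>a\<in>?I. \<Sum>b\<in>?I. if d dvd a \<and> d dvd b then 1 / real_of_int (max \<bar>a\<bar> \<bar>b\<bar>) else 0)
               \<le> (\<Sum>a\<in>?I. \<Sum>b\<in>?I. ?A a b) + (\<Sum>a\<in>?I. \<Sum>b\<in>?I. ?A b a)"
    by (simp only: sum.distrib[symmetric] sum_mono)
  also have "(\<Sum>a\<in>?I. \<Sum>b\<in>?I. ?A b a) = (\<Sum>a\<in>?I. \<Sum>b\<in>?I. ?A a b)"
    by (rule sum.swap)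
  finally show ?thesis
    using sum_inverse_abs_multiples_le[OF assms, of N] by simp
qed

definition linear_fibre :: "nat \<Rightarrow> int \<Rightarrow> int \<Rightarrow> int \<Rightarrow> (int \<times> int) set" where
  "linear_fibre N a b h =
     {(x, y). x \<in> {-int N..int N} \<and> y \<in> {-int N..int N} \<and> a * x - b * y = h}"

lemma finite_linear_fibre: "finite (linear_fibre N a b h)"
  unfolding linear_fibre_def
  by (rule finite_subset[of _ "{-int N..int N} \<times> {-int N..int N}"]) auto

lemma card_linear_fibre_le_square: "real (card (linear_fibre N a b h)) \<le> (2 * real N + 1)\<^sup>2"
proof -
  let ?I = "{-int N..int N}"
  have "card (linear_fibre N a b h) \<le> card (?I \<times> ?I)"
    by (intro card_mono) (auto simp: linear_fibre_def)
  also have "\<dots> = (2 * N + 1)\<^sup>2"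
    by (simp add: card_cartesian_product power2_eq_square nat_add_distrib nat_mult_distrib)
  finally have "real (card (linear_fibre N a b h)) \<le> real ((2 * N + 1)\<^sup>2)"
    by (rule of_nat_mono)
  then show ?thesis by (simp add: add.commute)
qed

lemma linear_fibre_eq_empty: "\<not> gcd a b dvd h \<Longrightarrow> linear_fibre N a b h = {}"
  unfolding linear_fibre_def by auto

lemma linear_fibre_swap: "linear_fibre N a b h = (\<lambda>(y, x). (x, y)) ` linear_fibre N b a (-h)"
  unfolding linear_fibre_def by (auto simp: image_iff)

lemma card_linear_fibre_le:
  assumes "a \<noteq> 0"
  shows "real (card (linear_fibre N a b h))
           \<le> 4 * real N * real_of_int (gcd a b) / real_of_int \<bar>a\<bar> + 1"
proof (cases "linear_fibre N a b h = {}")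
  case True
  then show ?thesis by simp
next
  case False
  then obtain x0 y0 where p0: "(x0, y0) \<in> linear_fibre N a b h" by auto
  define g where "g = gcd a b"
  define m where "m = \<bar>a div g\<bar>"
  have g_pos: "g > 0" using assms by (simp add: g_def)
  have "a = (a div g) * g" by (simp add: g_def)
  then have a_abs: "\<bar>a\<bar> = m * g"
    unfolding m_def using g_pos by (metis abs_mult abs_of_pos)
  then have "m \<noteq> 0" using assms by auto
  then have m_pos: "m > 0" by (simp add: m_def)
  \<comment> \<open>the second coordinates of all solutions are congruent to \<open>y0\<close> modulo \<open>m\<close>\<close>
  define f where "f p = snd p - y0" for p :: "int \<times> int"
  have inj: "inj_on f (linear_fibre N a b h)"
  proof (rule inj_onI)
    fix p q assume pq: "p \<in> linear_fibre N a b h" "q \<in> linear_fibre N a b h" "f p = f q"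
    then have "snd p = snd q" "a * fst p = a * fst q"
      unfolding f_def linear_fibre_def by auto
    then show "p = q" using assms by (simp add: prod_eq_iff)
  qed
  have "f ` linear_fibre N a b h \<subseteq> {z \<in> {-(2 * int N)..2 * int N}. m dvd z}"
  proof
    fix z assume "z \<in> f ` linear_fibre N a b h"
    then obtain x y where p: "(x, y) \<in> linear_fibre N a b h" and z: "z = y - y0"
      unfolding f_def by auto
    have "a * (x - x0) = b * (y - y0)"
      using p p0 unfolding linear_fibre_def by (simp add: algebra_simps)
    then have "m dvd z"
      using div_gcd_dvd_of_mult_eq assms unfolding m_def g_def z by simp
    moreover have "z \<in> {-(2 * int N)..2 * int N}"
      using p p0 unfolding linear_fibre_def z by auto
    ultimately show "z \<in> {z \<in> {-(2 * int N)..2 * int N}. m dvd z}" by simp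
  qed
  then have "card (f ` linear_fibre N a b h) \<le> card {z \<in> {-(2 * int N)..2 * int N}. m dvd z}"
    by (intro card_mono) (rule finite_subset[of _ "{-(2 * int N)..2 * int N}"], auto)
  then have "card (linear_fibre N a b h) \<le> card {z \<in> {-(2 * int N)..2 * int N}. m dvd z}"
    using inj by (simp add: card_image)
  then have "real (card (linear_fibre N a b h)) \<le> 2 * real_of_int (2 * int N) / real_of_int m + 1"
    using card_multiples_le[OF m_pos, of "2 * int N"] by simp
  also have "\<dots> = 4 * real N * real_of_int g / real_of_int \<bar>a\<bar> + 1"
    using m_pos g_pos by (simp add: a_abs field_simps)
  finally show ?thesis unfolding g_def .
qed

lemma card_linear_fibre_le_max:
  assumes "a \<noteq> 0 \<or> b \<noteq> 0"
  shows "real (card (linear_fibre N a b h))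
           \<le> 4 * real N * real_of_int (gcd a b) / real_of_int (max \<bar>a\<bar> \<bar>b\<bar>) + 1"
proof (cases "\<bar>b\<bar> \<le> \<bar>a\<bar>")
  case True
  then have "a \<noteq> 0" "max \<bar>a\<bar> \<bar>b\<bar> = \<bar>a\<bar>" using assms by auto
  then show ?thesis using card_linear_fibre_le[of a N b h] by simp
next
  case False
  have "card (linear_fibre N a b h) = card (linear_fibre N b a (-h))"
    unfolding linear_fibre_swap[of N a b h] by (rule card_image) (rule swap_inj_on)
  moreover have "b \<noteq> 0" "max \<bar>a\<bar> \<bar>b\<bar> = \<bar>b\<bar>" using False by auto
  ultimately show ?thesis using card_linear_fibre_le[of b N a "-h"] by (simp add: gcd.commute)
qed

lemma rN_eq_sum_card_linear_fibre:
  "rN N h = (\<Sum>a\<in>{-int N..int N}. \<Sum>b\<in>{-int N..int N}. card (linear_fibre N a b h))"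
proof -
  let ?I = "{-int N..int N}"
  let ?S = "SIGMA a:?I. SIGMA b:?I. linear_fibre N a b h"
  let ?f = "\<lambda>(a, b, x, y). (a :: int, x :: int, b :: int, y :: int)"
  have "{(a1, a2, a3, a4). a1 \<in> ?I \<and> a2 \<in> ?I \<and> a3 \<in> ?I \<and> a4 \<in> ?I \<and> a1 * a2 - a3 * a4 = h}
          = ?f ` ?S"
    unfolding linear_fibre_def by (force simp: image_iff)
  moreover have "inj_on ?f ?S" by (auto simp: inj_on_def)
  ultimately have "rN N h = card ?S"
    unfolding rN_def by (simp add: card_image)
  also have "\<dots> = (\<Sum>a\<in>?I. \<Sum>b\<in>?I. card (linear_fibre N a b h))"
    by (simp add: card_SigmaI finite_linear_fibre)
  finally show ?thesis .
qed

lemma abs_le_of_rN_nonzero: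
  assumes "rN N h \<noteq> 0"
  shows "\<bar>h\<bar> \<le> 2 * (int N)\<^sup>2"
proof -
  let ?I = "{-int N..int N}"
  let ?T = "{(a1, a2, a3, a4). a1 \<in> ?I \<and> a2 \<in> ?I \<and> a3 \<in> ?I \<and> a4 \<in> ?I \<and> a1 * a2 - a3 * a4 = h}"
  have "?T \<noteq> {}" using assms unfolding rN_def by (metis card.empty)
  then obtain t where "t \<in> ?T" by blast
  moreover obtain a1 a2 a3 a4 where "t = (a1, a2, a3, a4)" by (cases t) auto
  ultimately have "\<bar>a1\<bar> \<le> int N" "\<bar>a2\<bar> \<le> int N" "\<bar>a3\<bar> \<le> int N" "\<bar>a4\<bar> \<le> int N"
    and h: "h = a1 * a2 - a3 * a4" by auto
  then have "\<bar>a1 * a2\<bar> \<le> int N * int N" "\<bar>a3 * a4\<bar> \<le> int N * int N"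
    unfolding abs_mult by (simp_all add: mult_mono)
  then show ?thesis
    using abs_triangle_ineq4[of "a1 * a2" "a3 * a4"] h by (simp add: power2_eq_square)
qed

definition small_divisors :: "nat \<Rightarrow> int \<Rightarrow> nat set" where
  "small_divisors N h = {d \<in> {1..N}. int d dvd h}"

lemma finite_small_divisors [simp]: "finite (small_divisors N h)"
  by (simp add: small_divisors_def)

lemma card_linear_fibre_le_small_divisors:
  assumes "a \<in> {-int N..int N}" "b \<in> {-int N..int N}" "a \<noteq> 0 \<or> b \<noteq> 0"
  shows "real (card (linear_fibre N a b h)) \<le> 1 + 4 * real N *
           (\<Sum>d\<in>small_divisors N h.
              if int d dvd a \<and> int d dvd b then real d / real_of_int (max \<bar>a\<bar> \<bar>b\<bar>) else 0)"
    (is "_ \<le> 1 + 4 * real N * ?T")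
proof (cases "gcd a b dvd h")
  case False
  have "?T \<ge> 0" by (intro sum_nonneg) simp
  then show ?thesis using False by (simp add: linear_fibre_eq_empty)
next
  case True
  let ?M = "real_of_int (max \<bar>a\<bar> \<bar>b\<bar>)"
  define g where "g = nat (gcd a b)"
  have g_eq: "int g = gcd a b" by (simp add: g_def)
  have "g > 0" using assms(3) by (simp add: g_def)
  have "gcd a b \<le> max \<bar>a\<bar> \<bar>b\<bar>"
  proof (cases "a = 0")
    case False
    then have "\<bar>gcd a b\<bar> \<le> \<bar>a\<bar>" by (rule dvd_imp_le_int) simp
    then show ?thesis by simp
  qed simp
  moreover have "max \<bar>a\<bar> \<bar>b\<bar> \<le> int N" using assms(1,2) by auto
  ultimately have "g \<le> N" using g_eq by linarith
  then have g_mem: "g \<in> small_divisors N h"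
    unfolding small_divisors_def using \<open>g > 0\<close> True g_eq by simp
  have "(if int g dvd a \<and> int g dvd b then real g / ?M else 0) \<le> ?T"
    by (rule member_le_sum[OF g_mem]) simp_all
  then have "real g / ?M \<le> ?T" by (simp add: g_eq)
  then have "4 * real N * (real g / ?M) \<le> 4 * real N * ?T"
    by (rule mult_left_mono) simp
  moreover have "real_of_int (gcd a b) = real g" by (simp flip: g_eq)
  ultimately show ?thesis
    using card_linear_fibre_le_max[OF assms(3), of N h] by simp
qed

lemma sum_small_divisor_weights_le:
  "(\<Sum>a\<in>{-int N..int N}. \<Sum>b\<in>{-int N..int N}. \<Sum>d\<in>small_divisors N h.
      if int d dvd a \<and> int d dvd b then real d / real_of_int (max \<bar>a\<bar> \<bar>b\<bar>) else 0)
     \<le> 12 * real N * (\<Sum>d\<in>small_divisors N h. 1 / real d)"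
proof -
  let ?I = "{-int N..int N}"
  let ?D = "small_divisors N h"
  let ?W = "\<lambda>d a b. if int d dvd a \<and> int d dvd b then 1 / real_of_int (max \<bar>a\<bar> \<bar>b\<bar>) else 0"
  have "(\<Sum>a\<in>?I. \<Sum>b\<in>?I. \<Sum>d\<in>?D.
           if int d dvd a \<and> int d dvd b then real d / real_of_int (max \<bar>a\<bar> \<bar>b\<bar>) else 0)
          = (\<Sum>a\<in>?I. \<Sum>b\<in>?I. \<Sum>d\<in>?D. real d * ?W d a b)"
    by (intro sum.cong refl) simp
  also have "\<dots> = (\<Sum>a\<in>?I. \<Sum>d\<in>?D. \<Sum>b\<in>?I. real d * ?W d a b)"
    by (intro sum.cong refl sum.swap)
  also have "\<dots> = (\<Sum>d\<in>?D. \<Sum>a\<in>?I. \<Sum>b\<in>?I. real d * ?W d a b)"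
    by (rule sum.swap)
  also have "\<dots> = (\<Sum>d\<in>?D. real d * (\<Sum>a\<in>?I. \<Sum>b\<in>?I. ?W d a b))"
    by (simp only: sum_distrib_left)
  also have "\<dots> \<le> (\<Sum>d\<in>?D. real d * (12 * real N / (real d)\<^sup>2))"
  proof (intro sum_mono mult_left_mono)
    fix d assume "d \<in> ?D"
    then have "int d > 0" by (simp add: small_divisors_def)
    then show "(\<Sum>a\<in>?I. \<Sum>b\<in>?I. ?W d a b) \<le> 12 * real N / (real d)\<^sup>2"
      using sum_inverse_max_abs_multiples_le[of "int d" N] by simp
  qed simp
  also have "\<dots> = 12 * real N * (\<Sum>d\<in>?D. 1 / real d)"
    by (auto simp: sum_distrib_left power2_eq_square small_divisors_def intro!: sum.cong)
  finally show ?thesis .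
qed

lemma small_divisor_sum_ge_one:
  assumes "N \<ge> 1"
  shows "(\<Sum>d\<in>small_divisors N h. 1 / real d) \<ge> 1"
proof -
  have "1 \<in> small_divisors N h" using assms by (simp add: small_divisors_def)
  then show ?thesis using member_le_sum[of 1 "small_divisors N h" "\<lambda>d. 1 / real d"] by simp
qed

lemma rN_le_square_plus_small_divisor_sum:
  "real (rN N h) \<le> 2 * (2 * real N + 1)\<^sup>2 + 48 * (real N)\<^sup>2 * (\<Sum>d\<in>small_divisors N h. 1 / real d)"
proof -
  let ?I = "{-int N..int N}"
  define T where "T a b = (\<Sum>d\<in>small_divisors N h.
      if int d dvd a \<and> int d dvd b then real d / real_of_int (max \<bar>a\<bar> \<bar>b\<bar>) else 0)" for a b
  have pair: "real (card (linear_fibre N a b h))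
                \<le> (if a = 0 \<and> b = 0 then (2 * real N + 1)\<^sup>2 else 0) + 1 + 4 * real N * T a b"
    if "a \<in> ?I" "b \<in> ?I" for a b
  proof (cases "a = 0 \<and> b = 0")
    case True
    then show ?thesis using card_linear_fibre_le_square[of N a b h] by (simp add: T_def)
  next
    case False
    then show ?thesis
      using card_linear_fibre_le_small_divisors[OF that, of h] by (auto simp: T_def)
  qed
  have indicator: "(\<Sum>a\<in>?I. \<Sum>b\<in>?I. if a = 0 \<and> b = 0 then c else 0) = c" for c :: real
  proof -
    have "(\<Sum>b\<in>?I. if a = 0 \<and> b = 0 then c else 0) = (if a = 0 then c else 0)" for a
      by (cases "a = 0") simp_all
    then have "(\<Sum>a\<in>?I. \<Sum>b\<in>?I. if a = 0 \<and> b = 0 then c else 0) = (\<Sum>a\<in>?I. if a = 0 then c else 0)"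
      by (rule sum.cong[OF refl])
    then show ?thesis by simp
  qed
  have "real (rN N h) = (\<Sum>a\<in>?I. \<Sum>b\<in>?I. real (card (linear_fibre N a b h)))"
    by (simp add: rN_eq_sum_card_linear_fibre)
  also have "\<dots> \<le> (\<Sum>a\<in>?I. \<Sum>b\<in>?I.
      (if a = 0 \<and> b = 0 then (2 * real N + 1)\<^sup>2 else 0) + 1 + 4 * real N * T a b)"
    by (intro sum_mono pair)
  also have "\<dots> = 2 * (2 * real N + 1)\<^sup>2 + 4 * real N * (\<Sum>a\<in>?I. \<Sum>b\<in>?I. T a b)"
    by (simp add: sum.distrib sum_distrib_left indicator power2_eq_square algebra_simps)
  also have "\<dots> \<le> 2 * (2 * real N + 1)\<^sup>2 + 4 * real N * (12 * real N * (\<Sum>d\<in>small_divisors N h. 1 / real d))"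
    using sum_small_divisor_weights_le[of N h]
    by (intro add_left_mono mult_left_mono) (simp_all add: T_def)
  finally show ?thesis by (simp add: power2_eq_square)
qed

lemma rN_le_small_divisor_sum:
  assumes "N \<ge> 1"
  shows "real (rN N h) \<le> 66 * (real N)\<^sup>2 * (\<Sum>d\<in>small_divisors N h. 1 / real d)"
proof -
  let ?S = "\<Sum>d\<in>small_divisors N h. 1 / real d"
  have "(2 * real N + 1)\<^sup>2 \<le> (3 * real N)\<^sup>2"
    using assms by (intro power_mono) auto
  also have "\<dots> = 9 * (real N)\<^sup>2" by (simp add: power_mult_distrib)
  also have "\<dots> \<le> 9 * (real N)\<^sup>2 * ?S"
    using mult_left_mono[OF small_divisor_sum_ge_one[OF assms], of "9 * (real N)\<^sup>2" h] by simp
  finally show ?thesis using rN_le_square_plus_small_divisor_sum[of N h] by simp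
qed

lemma small_divisor_sum_zero_le_ln:
  assumes "N \<ge> 2"
  shows "(\<Sum>d\<in>small_divisors N 0. 1 / real d) \<le> 3 * ln (real N)"
proof -
  have "ln (1 / 2 :: real) \<le> 1 / 2 - 1" by (rule ln_le_minus_one) simp
  then have "1 / 2 \<le> ln (2 :: real)" by (simp add: ln_div)
  also have "\<dots> \<le> ln (real N)" using assms by simp
  finally have ln_ge: "1 / 2 \<le> ln (real N)" .
  have "(\<Sum>d\<in>small_divisors N 0. 1 / real d) = harm N"
    by (auto simp: small_divisors_def harm_def inverse_eq_divide intro: sum.cong)
  also have "\<dots> \<le> ln (real N) + 1"
    using euler_mascheroni_sequence_decreasing[of 1 N] assms by (simp add: harm_def)
  finally show ?thesis using ln_ge by linarith
qed

lemma rN_zero_le: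
  assumes "N \<ge> 2"
  shows "real (rN N 0) \<le> 198 * (real N)\<^sup>2 * ln (real N)"
proof -
  have "real (rN N 0) \<le> 66 * (real N)\<^sup>2 * (\<Sum>d\<in>small_divisors N 0. 1 / real d)"
    using assms by (intro rN_le_small_divisor_sum) simp
  also have "\<dots> \<le> 66 * (real N)\<^sup>2 * (3 * ln (real N))"
    by (intro mult_left_mono small_divisor_sum_zero_le_ln assms) simp
  finally show ?thesis by simp
qed

lemma inverse_sum_power_le:
  fixes D :: "nat set"
  assumes "finite D" "0 \<notin> D" "k > 0"
  shows "(\<Sum>d\<in>D. 1 / real d) ^ k
           \<le> (\<Sum>n. real n powr -(1 + 1 / (2 * real k))) ^ (k - 1) * (\<Sum>d\<in>D. real d powr (-1/2))"
proof -
  define s where "s = 1 + 1 / (2 * real k)"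
  \<comment> \<open>write \<open>1 / d = d\<^sup>-\<^sup>s \<cdot> d\<^sup>s\<^sup>-\<^sup>1\<close> and apply the power mean inequality with weights \<open>d\<^sup>-\<^sup>s\<close>\<close>
  have "s > 1" using assms(3) by (simp add: s_def)
  then have zeta_nonneg: "0 \<le> (\<Sum>n. real n powr -s)"
    by (intro suminf_nonneg summable_real_powr_neg) simp_all
  have pos: "real d > 0" if "d \<in> D" for d using that assms(2) by (cases d) auto
  have "(\<Sum>d\<in>D. 1 / real d) = (\<Sum>d\<in>D. real d powr -s * real d powr (s - 1))"
    by (intro sum.cong refl) (simp add: pos powr_neg_one flip: powr_add)
  then have "(\<Sum>d\<in>D. 1 / real d) ^ k
               \<le> (\<Sum>d\<in>D. real d powr -s) ^ (k - 1) * (\<Sum>d\<in>D. real d powr -s * (real d powr (s - 1)) ^ k)"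
    using power_weighted_sum_le[OF assms(1,3)] by simp
  also have "\<dots> \<le> (\<Sum>n. real n powr -s) ^ (k - 1) * (\<Sum>d\<in>D. real d powr (-1/2))"
  proof (intro mult_mono power_mono sum_mono sum_powr_le_suminf)
    fix d assume d: "d \<in> D"
    have "-s + real k * (s - 1) = -1/2 - 1 / (2 * real k)"
      using assms(3) by (simp add: s_def field_simps)
    then have "real d powr -s * (real d powr (s - 1)) ^ k = real d powr (-1/2 - 1 / (2 * real k))"
      using pos[OF d] by (simp add: powr_power flip: powr_add)
    also have "\<dots> \<le> real d powr (-1/2)"
      using pos[OF d] d assms(2) by (intro powr_mono) (auto simp: Suc_le_eq)
    finally show "real d powr -s * (real d powr (s - 1)) ^ k \<le> real d powr (-1/2)" .
  qed (use assms zeta_nonneg in \<open>auto simp: s_def intro: sum_nonneg\<close>)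
  finally show ?thesis by (simp add: s_def)
qed

lemma sum_sum_small_divisors_swap:
  fixes f :: "nat \<Rightarrow> real"
  assumes "finite H"
  shows "(\<Sum>h\<in>H. \<Sum>d\<in>small_divisors N h. f d) = (\<Sum>d\<in>{1..N}. real (card {h \<in> H. int d dvd h}) * f d)"
proof -
  have "(\<Sum>h\<in>H. \<Sum>d\<in>small_divisors N h. f d) = (\<Sum>h\<in>H. \<Sum>d\<in>{1..N}. if int d dvd h then f d else 0)"
    by (simp only: small_divisors_def sum.inter_filter[OF finite_atLeastAtMost])
  also have "\<dots> = (\<Sum>d\<in>{1..N}. \<Sum>h\<in>H. if int d dvd h then f d else 0)"
    by (rule sum.swap)
  also have "\<dots> = (\<Sum>d\<in>{1..N}. real (card {h \<in> H. int d dvd h}) * f d)"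
    using assms by (simp add: sum.inter_filter[symmetric])
  finally show ?thesis .
qed

lemma sum_small_divisor_sum_power_le:
  assumes "k > 0"
  obtains C :: real where "C > 0"
    and "\<And>N X. int N \<le> X \<Longrightarrow> (\<Sum>h\<in>{-X..X}. (\<Sum>d\<in>small_divisors N h. 1 / real d) ^ k) \<le> C * X"
proof -
  define K where "K = (\<Sum>n. real n powr -(1 + 1 / (2 * real k))) ^ (k - 1)"
  define Z where "Z = (\<Sum>n. real n powr -(3/2))"
  have "K \<ge> 0" unfolding K_def using assms
    by (intro zero_le_power suminf_nonneg summable_real_powr_neg) simp_all
  have "Z \<ge> 0" unfolding Z_def
    by (intro suminf_nonneg summable_real_powr_neg[of "3/2", simplified]) simp_all
  have "3 * K * Z \<ge> 0" using \<open>K \<ge> 0\<close> \<open>Z \<ge> 0\<close> by simp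
  then have pos: "3 * K * Z + 1 > 0" by simp
  have bound: "(\<Sum>h\<in>{-X..X}. (\<Sum>d\<in>small_divisors N h. 1 / real d) ^ k) \<le> (3 * K * Z + 1) * X"
    if "int N \<le> X" for N X
  proof -
    let ?H = "{-X..X}"
    have "(\<Sum>h\<in>?H. (\<Sum>d\<in>small_divisors N h. 1 / real d) ^ k)
            \<le> (\<Sum>h\<in>?H. K * (\<Sum>d\<in>small_divisors N h. real d powr (-1/2)))"
      unfolding K_def using assms
      by (intro sum_mono inverse_sum_power_le) (auto simp: small_divisors_def)
    also have "\<dots> = K * (\<Sum>d\<in>{1..N}. real (card {h \<in> ?H. int d dvd h}) * real d powr (-1/2))"
      by (simp add: sum_distrib_left[symmetric] sum_sum_small_divisors_swap)
    also have "\<dots> \<le> K * (\<Sum>d\<in>{1..N}. 3 * real_of_int X * real d powr -(3/2))"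
    proof (intro mult_left_mono sum_mono \<open>K \<ge> 0\<close>)
      fix d assume d: "d \<in> {1..N}"
      then have "real d \<le> real_of_int X" using that by simp
      then have "real (card {h \<in> ?H. int d dvd h}) \<le> 3 * real_of_int X / real d"
        using card_multiples_le[of "int d" X] d that by (simp add: field_simps)
      then have "real (card {h \<in> ?H. int d dvd h}) * real d powr (-1/2)
                   \<le> 3 * real_of_int X / real d * real d powr (-1/2)"
        by (rule mult_right_mono) simp
      also have "\<dots> = 3 * real_of_int X * (real d powr (-1/2) * real d powr -1)"
        using d by (simp add: powr_neg_one)
      also have "\<dots> = 3 * real_of_int X * real d powr -(3/2)"
        by (simp only: powr_add[symmetric]) simp
      finally show "real (card {h \<in> ?H. int d dvd h}) * real d powr (-1/2)
                      \<le> 3 * real_of_int X * real d powr -(3/2)" .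
    qed
    also have "\<dots> = 3 * K * X * (\<Sum>d\<in>{1..N}. real d powr -(3/2))"
      by (simp add: sum_distrib_left mult_ac)
    also have "\<dots> \<le> 3 * K * X * Z"
      unfolding Z_def using that \<open>K \<ge> 0\<close>
      by (intro mult_left_mono sum_powr_le_suminf) auto
    also have "\<dots> \<le> (3 * K * Z + 1) * X"
      using that by (simp add: algebra_simps)
    finally show ?thesis .
  qed
  show ?thesis by (rule that[OF pos]) (rule bound)
qed

lemma IkN_le:
  assumes "k > 0"
  obtains C where "C > 0" and "\<And>N. N \<ge> 1 \<Longrightarrow> real (IkN k N) \<le> C * real N ^ (2 * k + 2)"
proof -
  obtain C :: real where "C > 0" and C: "\<And>N X. int N \<le> X \<Longrightarrow>
      (\<Sum>h\<in>{-X..X}. (\<Sum>d\<in>small_divisors N h. 1 / real d) ^ k) \<le> C * X"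
    using sum_small_divisor_sum_power_le[OF assms] by blast
  have pos: "2 * 66 ^ k * C > 0" using \<open>C > 0\<close> by simp
  have bound: "real (IkN k N) \<le> 2 * 66 ^ k * C * real N ^ (2 * k + 2)" if "N \<ge> 1" for N
  proof -
    define X where "X = 2 * (int N)\<^sup>2"
    let ?S = "\<lambda>h. \<Sum>d\<in>small_divisors N h. 1 / real d"
    have "int N \<le> X" using that by (simp add: X_def power2_eq_square)
    have supp: "{h. rN N h \<noteq> 0} \<subseteq> {-X..X}"
    proof
      fix h assume "h \<in> {h. rN N h \<noteq> 0}"
      then have "\<bar>h\<bar> \<le> X" unfolding X_def by (intro abs_le_of_rN_nonzero) simp
      then show "h \<in> {-X..X}" by (simp add: abs_le_iff)
    qed
    have "real (IkN k N) = (\<Sum>h\<in>{h. rN N h \<noteq> 0}. real (rN N h) ^ k)"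
      by (simp add: IkN_def)
    also have "\<dots> \<le> (\<Sum>h\<in>{-X..X}. real (rN N h) ^ k)"
      by (rule sum_mono2[OF _ supp]) simp_all
    also have "\<dots> \<le> (\<Sum>h\<in>{-X..X}. (66 * (real N)\<^sup>2) ^ k * ?S h ^ k)"
    proof (rule sum_mono)
      fix h
      have "real (rN N h) ^ k \<le> (66 * (real N)\<^sup>2 * ?S h) ^ k"
        by (intro power_mono rN_le_small_divisor_sum that) simp
      then show "real (rN N h) ^ k \<le> (66 * (real N)\<^sup>2) ^ k * ?S h ^ k"
        by (simp add: power_mult_distrib)
    qed
    also have "\<dots> \<le> (66 * (real N)\<^sup>2) ^ k * (C * X)"
      unfolding sum_distrib_left[symmetric] by (intro mult_left_mono C \<open>int N \<le> X\<close>) simp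
    also have "\<dots> = 2 * 66 ^ k * C * ((real N)\<^sup>2 ^ k * (real N)\<^sup>2)"
      unfolding X_def by (simp add: power_mult_distrib)
    also have "\<dots> = 2 * 66 ^ k * C * real N ^ (2 * k + 2)"
      by (simp only: power_add power_mult)
    finally show ?thesis .
  qed
  show ?thesis by (rule that[OF pos]) (rule bound)
qed

theorem lemma1p5:
  shows "(\<exists>C::real. C > 0 \<and>
           (\<forall>N::nat. \<forall>h::int. N \<ge> 2 \<longrightarrow> 0 < \<bar>h\<bar> \<longrightarrow> \<bar>h\<bar> \<le> 2 * (int N)^2 \<longrightarrow>
              real (rN N h) \<le> C * (real N)^2 * (\<Sum>d \<in> {d::nat. 1 \<le> d \<and> d \<le> N \<and> int d dvd h}. 1 / real d)) \<and>
           (\<forall>N::nat. N \<ge> 2 \<longrightarrow> real (rN N 0) \<le> C * (real N)^2 * ln (real N))) \<and>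
         (\<forall>k::nat. k \<ge> 2 \<longrightarrow> (\<exists>Ck::real. Ck > 0 \<and>
           (\<forall>N::nat. N \<ge> 2 \<longrightarrow> real (IkN k N) \<le> Ck * (real N) ^ (2 * k + 2))))"
proof -
  have "real (rN N h) \<le> 198 * (real N)\<^sup>2 * (\<Sum>d \<in> {d. 1 \<le> d \<and> d \<le> N \<and> int d dvd h}. 1 / real d)"
    if "N \<ge> 2" for N h
  proof -
    have "{d. 1 \<le> d \<and> d \<le> N \<and> int d dvd h} = small_divisors N h"
      by (auto simp: small_divisors_def)
    moreover have "(\<Sum>d\<in>small_divisors N h. 1 / real d) \<ge> 0" by (intro sum_nonneg) simp
    ultimately show ?thesis
      using rN_le_small_divisor_sum[of N h] that by (simp add: mult_right_mono)
  qed
  moreover have "\<exists>Ck::real. Ck > 0 \<and> (\<forall>N. N \<ge> 2 \<longrightarrow> real (IkN k N) \<le> Ck * real N ^ (2 * k + 2))"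
    if "k \<ge> 2" for k
  proof -
    have "k > 0" using that by simp
    then obtain C where "C > 0" and "\<And>N. N \<ge> 1 \<Longrightarrow> real (IkN k N) \<le> C * real N ^ (2 * k + 2)"
      using IkN_le by blast
    then show ?thesis by auto
  qed
  ultimately show ?thesis
    using rN_zero_le by (intro conjI exI[of _ "198::real"]) auto
qed

end
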